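(* For all $s,s_1,s_2\in\mathcal S$ the link velocities satisfy the reciprocity relation $$\vec\beta(s,s_2,s_1)=-\,\vec\beta(s,s_1,s_2)$$ in $T_s\mathcal S$.
   Context: $V$ is a 4-dimensional real vector space with a symmetric non-degenerate bilinear form $\eta$ of signature $(-,+,+,+)$; $\mathcal S$ is one fixed connected component of $\{v\in V:\eta(v,v)=-1\}$; $T_s\mathcal S:=\{u\in V:\eta(u,s)=0\}$. With $(u\otimes v)(w):=\eta(v,w)u$, for $s\in\mathcal S$ and $\vec\beta\in T_s\mathcal S$ with $\beta^2=\eta(\vec\beta,\vec\beta)<1$, $\beta>0$, $\vec n=\vec\beta/\beta$, $\gamma=(1-\beta^2)^{-1/2}$, the boost relative to $s$ is $B(s,\vec\beta)=\mathrm{id}_V+(\gamma-1)(-s\otimes s+\vec n\otimes\vec n)+\beta\gamma(s\otimes\vec n-\vec n\otimes s)$, $B(s,0)=\mathrm{id}_V$. The link velocity $\vec\beta(s,s_1,s_2)$ of $s_2$ against $s_1$ relative to $s$ is the unique $\vec\beta\in T_s\mathcal S$ of $\eta$-norm $<1$ with $B(s,\vec\beta)s_1=s_2$. *)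

theory Defs
  imports "HOL-Analysis.Analysis"
begin

text \<open>Signature is expressed by the existence of an
eta-orthonormal basis e_0,...,e_3 with eta(e_0,e_0) = -1 and eta(e_i,e_i) = 1 for i > 0.\<close>
definition lorentz_form :: "('v::euclidean_space \<Rightarrow> 'v \<Rightarrow> real) \<Rightarrow> bool" where
  "lorentz_form \<eta> \<longleftrightarrow>
     DIM('v) = 4 \<and> bilinear \<eta> \<and> (\<forall>u v. \<eta> u v = \<eta> v u) \<and>
     (\<forall>u. (\<forall>v. \<eta> u v = 0) \<longrightarrow> u = 0) \<and>
     (\<exists>e::nat \<Rightarrow> 'v. span (e ` {..<4}) = UNIV \<and>
        (\<forall>i<4. \<forall>j<4. \<eta> (e i) (e j) = (if i \<noteq> j then 0 else if i = 0 then -1 else 1)))"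

definition hyperboloid :: "('v \<Rightarrow> 'v \<Rightarrow> real) \<Rightarrow> 'v set" where
  "hyperboloid \<eta> = {v. \<eta> v v = -1}"

definition tangent_space :: "('v \<Rightarrow> 'v \<Rightarrow> real) \<Rightarrow> 'v \<Rightarrow> 'v::real_vector set" where
  "tangent_space \<eta> s = {u. \<eta> u s = 0}"

definition boost :: "('v \<Rightarrow> 'v \<Rightarrow> real) \<Rightarrow> 'v \<Rightarrow> 'v \<Rightarrow> 'v \<Rightarrow> 'v::real_vector" where
  "boost \<eta> s b =
     (if b = 0 then id
      else (let \<beta> = sqrt (\<eta> b b); n = (1 / \<beta>) *\<^sub>R b; \<gamma> = 1 / sqrt (1 - \<beta>\<^sup>2) in
            (\<lambda>w. w + (\<gamma> - 1) *\<^sub>R (- (\<eta> s w *\<^sub>R s) + \<eta> n w *\<^sub>R n)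
                   + (\<beta> * \<gamma>) *\<^sub>R (\<eta> n w *\<^sub>R s - \<eta> s w *\<^sub>R n))))"

definition link_velocity :: "('v \<Rightarrow> 'v \<Rightarrow> real) \<Rightarrow> 'v \<Rightarrow> 'v \<Rightarrow> 'v \<Rightarrow> 'v::real_vector" where
  "link_velocity \<eta> s s1 s2 =
     (THE b. b \<in> tangent_space \<eta> s \<and> \<eta> b b < 1 \<and> boost \<eta> s b s1 = s2)"

end

(*
  Fix s and describe a vector w by its time coordinate a = -eta(s,w) and its projection to
  the tangent space T_s.  For a unit vector n in T_s, the boost B(s, t n) acts on the pair
  (a, eta(n,w)) as the hyperbolic rotation by rapidity artanh t and fixes the part of w
  orthogonal to s and n.  Hence B(s,b) s1 = s2 forces b to be parallel to the difference of
  the projections of s2 and s1 (b = 0 when s1 = s2), and along that direction there is exactly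
  one rotation carrying (a1, x1) to (a2, x2): both pairs satisfy |x| < a and have the same
  value of a^2 - x^2.  So the link velocity is the unique solution of its defining equation,
  and since B(s,-b) inverts B(s,b), the vector -b solves the equation for the swapped pair.

  The sign a > 0 needed throughout holds on the component of the hyperboloid containing s,
  because eta(., s) is continuous and cannot vanish there; that it cannot vanish, i.e. that
  eta is positive definite on T_s, is the reverse Cauchy-Schwarz inequality in an
  orthonormal basis.
*)

theory Submission
  imports Defs
begin

definition lorentz_factor :: "real \<Rightarrow> real" where
  "lorentz_factor t = 1 / sqrt (1 - t\<^sup>2)"

lemma lorentz_factor_0 [simp]: "lorentz_factor 0 = 1"
  by (simp add: lorentz_factor_def)

lemma lorentz_factor_minus [simp]: "lorentz_factor (- t) = lorentz_factor t"
  by (simp add: lorentz_factor_def)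

lemma lorentz_factor_pos: "\<bar>t\<bar> < 1 \<Longrightarrow> 0 < lorentz_factor t"
  by (simp add: lorentz_factor_def abs_square_less_1)

lemma lorentz_factor_sq:
  assumes "\<bar>t\<bar> < 1"
  shows "(lorentz_factor t)\<^sup>2 * (1 - t\<^sup>2) = 1"
proof -
  have "t\<^sup>2 < 1"
    using assms by (simp add: abs_square_less_1)
  then show ?thesis
    by (simp add: lorentz_factor_def power_divide)
qed

lemma doppler_factor_sq:
  assumes "\<bar>t\<bar> < 1"
  shows "(lorentz_factor t * (1 + t))\<^sup>2 = (1 + t) / (1 - t)"
proof -
  have "(lorentz_factor t * (1 + t))\<^sup>2 * (1 - t) = (lorentz_factor t)\<^sup>2 * (1 - t\<^sup>2) * (1 + t)"
    by (simp add: power2_eq_square algebra_simps)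
  then show ?thesis
    using lorentz_factor_sq[OF assms] assms by (simp add: field_simps)
qed

lemma doppler_factor_ex1:
  assumes "0 < k"
  shows "\<exists>!t. \<bar>t\<bar> < 1 \<and> lorentz_factor t * (1 + t) = k"
proof -
  have k2: "0 < k\<^sup>2 + 1"
    by (simp add: add_nonneg_pos)
  define t0 where "t0 = (k\<^sup>2 - 1) / (k\<^sup>2 + 1)"
  have t0_bound: "\<bar>t0\<bar> < 1"
    using assms by (simp add: t0_def abs_less_iff field_simps add_pos_nonneg)
  have "(1 + t0) / (1 - t0) = k\<^sup>2"
    using k2 by (simp add: t0_def field_simps)
  then have "(lorentz_factor t0 * (1 + t0))\<^sup>2 = k\<^sup>2"
    using doppler_factor_sq[OF t0_bound] by simp
  moreover have "0 < lorentz_factor t0 * (1 + t0)"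
    using lorentz_factor_pos[OF t0_bound] t0_bound by (intro mult_pos_pos) linarith+
  ultimately have "lorentz_factor t0 * (1 + t0) = k"
    using assms by (simp add: power2_eq_iff_nonneg)
  moreover have "t = t0" if t: "\<bar>t\<bar> < 1" "lorentz_factor t * (1 + t) = k" for t
  proof -
    have "k\<^sup>2 = (1 + t) / (1 - t)" and "t < 1"
      using doppler_factor_sq[OF t(1)] t by auto
    then have "k\<^sup>2 * (1 - t) = 1 + t"
      by simp
    then show "t = t0"
      using k2 by (simp add: t0_def field_simps)
  qed
  ultimately show ?thesis
    using t0_bound by blast
qed

definition hyperbolic_rotation :: "real \<Rightarrow> real \<times> real \<Rightarrow> real \<times> real" where
  "hyperbolic_rotation t =
    (\<lambda>(a, x). (lorentz_factor t * (a + t * x), lorentz_factor t * (x + t * a)))"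

lemma hyperbolic_rotation_0 [simp]: "hyperbolic_rotation 0 p = p"
  by (simp add: hyperbolic_rotation_def split: prod.split)

text \<open>In the light-cone coordinates \<open>a + x\<close> and \<open>a - x\<close> the rotation by \<open>t\<close> multiplies by
  the Doppler factor \<open>lorentz_factor t * (1 + t) = sqrt ((1 + t) / (1 - t))\<close> and by its inverse.
  As \<open>(a - x) * (a + x)\<close> is preserved, matching \<open>a + x\<close> already forces \<open>a - x\<close> to match.\<close>

lemma hyperbolic_rotation_iff:
  fixes a1 x1 a2 x2 t :: real
  assumes t: "\<bar>t\<bar> < 1" and pos: "0 < a2 + x2"
    and inv: "(a1 - x1) * (a1 + x1) = (a2 - x2) * (a2 + x2)"
  shows "hyperbolic_rotation t (a1, x1) = (a2, x2)
    \<longleftrightarrow> lorentz_factor t * (1 + t) * (a1 + x1) = a2 + x2"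
  unfolding hyperbolic_rotation_def prod.case prod.inject
proof
  assume "lorentz_factor t * (a1 + t * x1) = a2 \<and> lorentz_factor t * (x1 + t * a1) = x2"
  then show "lorentz_factor t * (1 + t) * (a1 + x1) = a2 + x2"
    by (auto simp: algebra_simps)
next
  define g where "g = lorentz_factor t"
  assume plus: "lorentz_factor t * (1 + t) * (a1 + x1) = a2 + x2"
  have doppler: "(g * (1 + t)) * (g * (1 - t)) = 1"
    using lorentz_factor_sq[OF t] unfolding g_def by (simp add: power2_eq_square algebra_simps)
  have "g * (1 - t) * (a1 - x1) * (a2 + x2) = g * (1 - t) * (a1 - x1) * (g * (1 + t) * (a1 + x1))"
    using plus unfolding g_def by simp
  also have "\<dots> = (g * (1 + t)) * (g * (1 - t)) * ((a1 - x1) * (a1 + x1))"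
    by (simp only: ac_simps)
  also have "\<dots> = (a2 - x2) * (a2 + x2)"
    using doppler inv by simp
  finally have minus: "g * (1 - t) * (a1 - x1) = a2 - x2"
    using pos by simp
  have "g * (a1 + t * x1) = (g * (1 + t) * (a1 + x1) + g * (1 - t) * (a1 - x1)) / 2"
    and "g * (x1 + t * a1) = (g * (1 + t) * (a1 + x1) - g * (1 - t) * (a1 - x1)) / 2"
    by (simp_all add: algebra_simps)
  then show "lorentz_factor t * (a1 + t * x1) = a2 \<and> lorentz_factor t * (x1 + t * a1) = x2"
    using plus minus unfolding g_def[symmetric] by simp
qed

lemma hyperbolic_rotation_ex1:
  fixes a1 x1 a2 x2 :: real
  assumes "\<bar>x1\<bar> < a1" and "\<bar>x2\<bar> < a2" and "a1\<^sup>2 - x1\<^sup>2 = a2\<^sup>2 - x2\<^sup>2"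
  shows "\<exists>!t. \<bar>t\<bar> < 1 \<and> hyperbolic_rotation t (a1, x1) = (a2, x2)"
proof -
  have pos1: "0 < a1 + x1" and pos2: "0 < a2 + x2"
    using assms(1,2) by linarith+
  have inv: "(a1 - x1) * (a1 + x1) = (a2 - x2) * (a2 + x2)"
    using assms(3) by (simp add: power2_eq_square algebra_simps)
  have "(\<bar>t\<bar> < 1 \<and> hyperbolic_rotation t (a1, x1) = (a2, x2))
      \<longleftrightarrow> (\<bar>t\<bar> < 1 \<and> lorentz_factor t * (1 + t) = (a2 + x2) / (a1 + x1))" for t
    using hyperbolic_rotation_iff[OF _ pos2 inv, of t] pos1 by (auto simp: field_simps)
  then show ?thesis
    using doppler_factor_ex1[of "(a2 + x2) / (a1 + x1)"] pos1 pos2 by simp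
qed

lemma hyperbolic_rotation_inverse:
  assumes "\<bar>t\<bar> < 1"
  shows "hyperbolic_rotation (- t) (hyperbolic_rotation t p) = p"
proof -
  have "hyperbolic_rotation (- t) (hyperbolic_rotation t (a, x))
      = ((lorentz_factor t)\<^sup>2 * (1 - t\<^sup>2) * a, (lorentz_factor t)\<^sup>2 * (1 - t\<^sup>2) * x)" for a x
    by (simp add: hyperbolic_rotation_def power2_eq_square algebra_simps)
  then show ?thesis
    using lorentz_factor_sq[OF assms] by (cases p) simp
qed

lemma minkowski_reverse_cauchy_schwarz:
  fixes x u :: "'a::real_inner" and x0 u0 :: real
  assumes x: "x0\<^sup>2 = 1 + inner x x" and orth: "u0 * x0 = inner u x"
    and nonzero: "u0 \<noteq> 0 \<or> u \<noteq> 0"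
  shows "u0\<^sup>2 < inner u u"
proof -
  have x0_pos: "0 < x0\<^sup>2"
    using x by (simp add: add_pos_nonneg)
  show ?thesis
  proof (cases "u = 0")
    case True
    with orth x0_pos have "u0 = 0"
      by auto
    with True nonzero show ?thesis
      by simp
  next
    case False
    have "(u0 * x0)\<^sup>2 \<le> inner u u * inner x x"
      unfolding orth by (rule Cauchy_Schwarz_ineq)
    then have "inner u u \<le> x0\<^sup>2 * (inner u u - u0\<^sup>2)"
      using x by (simp add: power_mult_distrib algebra_simps)
    moreover have "0 < inner u u"
      using False by simp
    ultimately show ?thesis
      using x0_pos by (smt (verit) mult_nonneg_nonpos)
  qed
qed

locale lorentz_observer =
  fixes \<eta> :: "'v::real_vector \<Rightarrow> 'v \<Rightarrow> real" and s :: 'v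
  assumes bilinear: "bilinear \<eta>"
    and sym: "\<eta> u v = \<eta> v u"
    and observer_unit: "\<eta> s s = -1"
    and spacelike_pos: "\<eta> u s = 0 \<Longrightarrow> u \<noteq> 0 \<Longrightarrow> 0 < \<eta> u u"
begin

lemma eta_simps [simp]:
  "\<eta> (x + y) z = \<eta> x z + \<eta> y z" "\<eta> x (y + z) = \<eta> x y + \<eta> x z"
  "\<eta> (x - y) z = \<eta> x z - \<eta> y z" "\<eta> x (y - z) = \<eta> x y - \<eta> x z"
  "\<eta> (c *\<^sub>R x) y = c * \<eta> x y" "\<eta> x (c *\<^sub>R y) = c * \<eta> x y"
  "\<eta> (- x) y = - \<eta> x y" "\<eta> x (- y) = - \<eta> x y"
  "\<eta> 0 y = 0" "\<eta> x 0 = 0"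
  using bilinear by (simp_all add: bilinear_ladd bilinear_radd bilinear_lsub bilinear_rsub
      bilinear_lmul bilinear_rmul bilinear_lneg bilinear_rneg bilinear_lzero bilinear_rzero)

lemma spacelike_nonneg: "\<eta> u s = 0 \<Longrightarrow> 0 \<le> \<eta> u u"
  using spacelike_pos[of u] by (cases "u = 0") auto

definition proj :: "'v \<Rightarrow> 'v" where
  "proj w = w + \<eta> s w *\<^sub>R s"

lemma eta_proj_observer [simp]: "\<eta> (proj w) s = 0" "\<eta> s (proj w) = 0"
  by (simp_all add: proj_def observer_unit sym[of w s])

lemma eta_proj_self: "\<eta> (proj w) (proj w) = \<eta> w w + (\<eta> s w)\<^sup>2"
  by (simp add: proj_def observer_unit sym[of w s] power2_eq_square)

lemma eta_proj_right: "\<eta> n s = 0 \<Longrightarrow> \<eta> n (proj w) = \<eta> n w"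
  by (simp add: proj_def)

lemma proj_add_observer: "\<eta> n s = 0 \<Longrightarrow> proj (w + a *\<^sub>R s + b *\<^sub>R n) = proj w + b *\<^sub>R n"
  by (simp add: proj_def observer_unit sym[of s n] algebra_simps)

lemma eta_transverse_self:
  assumes "\<eta> n s = 0" and "\<eta> n n = 1"
  shows "\<eta> (proj w - \<eta> n w *\<^sub>R n) (proj w - \<eta> n w *\<^sub>R n) = \<eta> w w + (\<eta> s w)\<^sup>2 - (\<eta> n w)\<^sup>2"
  using assms eta_proj_self eta_proj_right[OF assms(1)] sym[of n "proj w"]
  by (simp add: power2_eq_square)

definition direction :: "'v \<Rightarrow> 'v" where
  "direction u = (1 / sqrt (\<eta> u u)) *\<^sub>R u"

lemma direction:
  assumes "\<eta> u s = 0" and "u \<noteq> 0"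
  shows "\<eta> (direction u) s = 0" and "\<eta> (direction u) (direction u) = 1"
    and "u = sqrt (\<eta> u u) *\<^sub>R direction u"
  using assms spacelike_pos[OF assms] by (simp_all add: direction_def)

definition future_unit :: "'v \<Rightarrow> bool" where
  "future_unit w \<longleftrightarrow> \<eta> w w = -1 \<and> \<eta> w s < 0"

lemma future_unit_abs_lt:
  assumes w: "future_unit w" and n: "\<eta> n s = 0" "\<eta> n n = 1"
  shows "\<bar>\<eta> n w\<bar> < - \<eta> s w"
proof -
  have "0 \<le> \<eta> (proj w - \<eta> n w *\<^sub>R n) (proj w - \<eta> n w *\<^sub>R n)"
    using n by (intro spacelike_nonneg) simp
  then have "(\<eta> n w)\<^sup>2 < (- \<eta> s w)\<^sup>2"
    using w eta_transverse_self[OF n, of w] unfolding future_unit_def by simp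
  moreover have "0 \<le> - \<eta> s w"
    using w sym[of s w] unfolding future_unit_def by simp
  ultimately show ?thesis
    using power2_less_imp_less[of "\<bar>\<eta> n w\<bar>" "- \<eta> s w"] by simp
qed

lemma hyperbolic_invariant:
  assumes w: "\<eta> w w = -1" "\<eta> w' w' = -1" and n: "\<eta> n s = 0" "\<eta> n n = 1"
    and w': "proj w' = proj w + c *\<^sub>R n"
  shows "(- \<eta> s w)\<^sup>2 - (\<eta> n w)\<^sup>2 = (- \<eta> s w')\<^sup>2 - (\<eta> n w')\<^sup>2"
proof -
  have "\<eta> n w' = \<eta> n w + c"
    using arg_cong[OF w', of "\<eta> n"] n by (simp add: eta_proj_right)
  then have "proj w' - \<eta> n w' *\<^sub>R n = proj w - \<eta> n w *\<^sub>R n"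
    using w' by (simp add: algebra_simps)
  then show ?thesis
    using eta_transverse_self[OF n, of w] eta_transverse_self[OF n, of w'] w by simp
qed

lemma future_unit_proj_inj:
  assumes "future_unit w" and "future_unit w'" and "proj w = proj w'"
  shows "w = w'"
proof -
  have "(\<eta> s w)\<^sup>2 = (\<eta> s w')\<^sup>2"
    using eta_proj_self[of w] eta_proj_self[of w'] assms unfolding future_unit_def by simp
  moreover have "\<eta> s w < 0" and "\<eta> s w' < 0"
    using assms(1,2) sym[of s] unfolding future_unit_def by auto
  ultimately have "\<eta> s w = \<eta> s w'"
    by (simp add: power2_eq_iff)
  then show ?thesis
    using assms(3) unfolding proj_def by simp
qed

lemma boost_scaleR_unit:
  assumes n: "\<eta> n s = 0" "\<eta> n n = 1" and t: "\<bar>t\<bar> < 1"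
  shows "boost \<eta> s (t *\<^sub>R n) w = w
    + (lorentz_factor t * (t * \<eta> n w - \<eta> s w) + \<eta> s w) *\<^sub>R s
    + (lorentz_factor t * (\<eta> n w - t * \<eta> s w) - \<eta> n w) *\<^sub>R n"
proof (cases "t = 0")
  case True
  then show ?thesis
    by (simp add: boost_def)
next
  case False
  define g where "g = lorentz_factor t"
  \<comment> \<open>\<open>boost_def\<close> normalises \<open>t *\<^sub>R n\<close> to the unit vector \<open>m\<close>, which is \<open>n\<close> or \<open>- n\<close>\<close>
  define m where "m = sgn t *\<^sub>R n"
  have b: "t *\<^sub>R n \<noteq> 0"
    using False n by auto
  have beta: "sqrt (\<eta> (t *\<^sub>R n) (t *\<^sub>R n)) = \<bar>t\<bar>"
    using n by (simp add: power2_eq_square[symmetric])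
  have dir: "(1 / \<bar>t\<bar>) *\<^sub>R t *\<^sub>R n = m"
    using False by (simp add: m_def sgn_if)
  have "boost \<eta> s (t *\<^sub>R n) w = w + (g - 1) *\<^sub>R (- (\<eta> s w *\<^sub>R s) + \<eta> m w *\<^sub>R m)
      + (\<bar>t\<bar> * g) *\<^sub>R (\<eta> m w *\<^sub>R s - \<eta> s w *\<^sub>R m)"
    unfolding boost_def Let_def beta dir g_def lorentz_factor_def power2_abs using b by simp
  moreover have "\<eta> m w *\<^sub>R m = \<eta> n w *\<^sub>R n"
    using False by (auto simp: m_def sgn_if)
  moreover have "(\<bar>t\<bar> * g) *\<^sub>R (\<eta> m w *\<^sub>R s - \<eta> s w *\<^sub>R m)
      = g *\<^sub>R ((\<bar>t\<bar> * \<eta> m w) *\<^sub>R s - \<eta> s w *\<^sub>R (\<bar>t\<bar> *\<^sub>R m))"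
    by (simp add: algebra_simps)
  moreover have "\<bar>t\<bar> * \<eta> m w = t * \<eta> n w" and "\<bar>t\<bar> *\<^sub>R m = t *\<^sub>R n"
    by (auto simp: m_def sgn_if)
  ultimately show ?thesis
    unfolding g_def[symmetric] by (simp add: algebra_simps)
qed

lemma boost_eq_iff:
  assumes n: "\<eta> n s = 0" "\<eta> n n = 1" and t: "\<bar>t\<bar> < 1"
    and w': "proj w' = proj w + c *\<^sub>R n"
  shows "boost \<eta> s (t *\<^sub>R n) w = w' \<longleftrightarrow>
    hyperbolic_rotation t (- \<eta> s w, \<eta> n w) = (- \<eta> s w', \<eta> n w')"
    (is "?lhs \<longleftrightarrow> ?rhs")
proof
  assume ?lhs
  have "\<eta> (boost \<eta> s (t *\<^sub>R n) w) s
      = \<eta> w s - (lorentz_factor t * (t * \<eta> n w - \<eta> s w) + \<eta> s w)"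
    and "\<eta> n (boost \<eta> s (t *\<^sub>R n) w) = lorentz_factor t * (\<eta> n w - t * \<eta> s w)"
    unfolding boost_scaleR_unit[OF n t] using n observer_unit by simp_all
  with \<open>?lhs\<close> show ?rhs
    using sym[of w s] sym[of w' s] by (simp add: hyperbolic_rotation_def algebra_simps)
next
  assume ?rhs
  have "\<eta> n w' = \<eta> n w + c"
    using arg_cong[OF w', of "\<eta> n"] n by (simp add: eta_proj_right)
  with \<open>?rhs\<close>[unfolded hyperbolic_rotation_def prod.case prod.inject]
  have "lorentz_factor t * (t * \<eta> n w - \<eta> s w) + \<eta> s w = \<eta> s w - \<eta> s w'"
    and "lorentz_factor t * (\<eta> n w - t * \<eta> s w) - \<eta> n w = c"
    by (simp_all only: right_diff_distrib distrib_left mult_minus_right ac_simps) linarith+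
  moreover have "w' = w + (\<eta> s w - \<eta> s w') *\<^sub>R s + c *\<^sub>R n"
    using w' unfolding proj_def by (simp add: algebra_simps)
  ultimately show ?lhs
    unfolding boost_scaleR_unit[OF n t] by simp
qed

lemma proj_boost_scaleR_unit:
  assumes n: "\<eta> n s = 0" "\<eta> n n = 1" and t: "\<bar>t\<bar> < 1"
  shows "proj (boost \<eta> s (t *\<^sub>R n) w)
    = proj w + (lorentz_factor t * (\<eta> n w - t * \<eta> s w) - \<eta> n w) *\<^sub>R n"
  unfolding boost_scaleR_unit[OF assms] using proj_add_observer[OF n(1)] .

lemma subluminal_cases:
  assumes "\<eta> b s = 0" and "\<eta> b b < 1"
  obtains "b = 0"
  | t n where "\<eta> n s = 0" "\<eta> n n = 1" "0 < t" "t < 1" "b = t *\<^sub>R n"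
proof (cases "b = 0")
  case False
  note n = direction[OF assms(1) False]
  have "0 < sqrt (\<eta> b b)" "sqrt (\<eta> b b) < 1"
    using assms spacelike_pos[OF assms(1) False] by simp_all
  with n that(2) show thesis
    by blast
qed (use that in blast)

lemma proj_boost:
  assumes "\<eta> b s = 0" and "\<eta> b b < 1"
  shows "\<exists>c. proj (boost \<eta> s b w) = proj w + c *\<^sub>R b"
  using assms
proof (cases rule: subluminal_cases)
  case 1
  then show ?thesis
    by (simp add: boost_def)
next
  case (2 t n)
  then have "proj (boost \<eta> s b w)
      = proj w + ((lorentz_factor t * (\<eta> n w - t * \<eta> s w) - \<eta> n w) / t) *\<^sub>R b"
    using proj_boost_scaleR_unit[of n t w] by simp
  then show ?thesis ..
qed

lemma boost_uminus_inverse: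
  assumes "\<eta> b s = 0" and "\<eta> b b < 1"
  shows "boost \<eta> s (- b) (boost \<eta> s b w) = w"
  using assms
proof (cases rule: subluminal_cases)
  case 1
  then show ?thesis
    by (simp add: boost_def)
next
  case (2 t n)
  then have n: "\<eta> n s = 0" "\<eta> n n = 1" and t: "\<bar>t\<bar> < 1" "\<bar>- t\<bar> < 1"
    by simp_all
  define w' where "w' = boost \<eta> s (t *\<^sub>R n) w"
  obtain c where c: "proj w' = proj w + c *\<^sub>R n"
    using proj_boost_scaleR_unit[OF n t(1)] unfolding w'_def by blast
  then have c_back: "proj w = proj w' + (- c) *\<^sub>R n"
    by simp
  have "hyperbolic_rotation t (- \<eta> s w, \<eta> n w) = (- \<eta> s w', \<eta> n w')"
    using boost_eq_iff[OF n t(1) c] unfolding w'_def by simp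
  then have "boost \<eta> s ((- t) *\<^sub>R n) w' = w"
    using boost_eq_iff[OF n t(2) c_back] hyperbolic_rotation_inverse[OF t(1)] by metis
  then show ?thesis
    using 2 unfolding w'_def by simp
qed

lemma boost_eq_self_iff:
  assumes w: "future_unit w" and b: "\<eta> b s = 0" "\<eta> b b < 1"
  shows "boost \<eta> s b w = w \<longleftrightarrow> b = 0"
proof
  assume fixed: "boost \<eta> s b w = w"
  from b show "b = 0"
  proof (cases rule: subluminal_cases)
    case (2 t n)
    then have n: "\<eta> n s = 0" "\<eta> n n = 1" and t: "\<bar>t\<bar> < 1"
      by simp_all
    let ?P = "\<lambda>t. \<bar>t\<bar> < 1 \<and> hyperbolic_rotation t (- \<eta> s w, \<eta> n w) = (- \<eta> s w, \<eta> n w)"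
    have "\<exists>!t. ?P t"
      using future_unit_abs_lt[OF w n] by (intro hyperbolic_rotation_ex1) simp_all
    moreover have "?P t"
      using fixed boost_eq_iff[OF n t, of w w 0] t 2 by simp
    moreover have "?P 0"
      by simp
    ultimately have "t = 0"
      by blast
    with 2 show ?thesis
      by simp
  qed
next
  assume "b = 0"
  then show "boost \<eta> s b w = w"
    by (simp add: boost_def)
qed

lemma boost_eq_imp_parallel:
  assumes b: "\<eta> b s = 0" "\<eta> b b < 1" and w': "boost \<eta> s b w = w'"
    and y: "proj w' - proj w \<noteq> 0"
  shows "\<exists>t. \<bar>t\<bar> < 1 \<and> b = t *\<^sub>R direction (proj w' - proj w)"
proof -
  define y where "y = proj w' - proj w"
  have y_orth: "\<eta> y s = 0"
    by (simp add: y_def)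
  obtain c where "proj w' = proj w + c *\<^sub>R b"
    using proj_boost[OF b, of w] w' by blast
  then have y_eq: "y = c *\<^sub>R b"
    by (simp add: y_def)
  with y have "c \<noteq> 0"
    by (auto simp: y_def)
  define t where "t = sqrt (\<eta> y y) / c"
  have "t *\<^sub>R direction y = (1 / c) *\<^sub>R (sqrt (\<eta> y y) *\<^sub>R direction y)"
    by (simp add: t_def)
  also have "\<dots> = (1 / c) *\<^sub>R y"
    using direction(3)[OF y_orth y[folded y_def]] by simp
  also have "\<dots> = b"
    using y_eq \<open>c \<noteq> 0\<close> by simp
  finally have "b = t *\<^sub>R direction y" ..
  moreover have "t\<^sup>2 < 1"
    using b(2) direction(2)[OF y_orth y[folded y_def]] calculation
    by (simp add: power2_eq_square)
  ultimately show ?thesis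
    unfolding y_def by (auto simp: abs_square_less_1)
qed

lemma link_velocity_ex1:
  assumes s1: "future_unit s1" and s2: "future_unit s2"
  shows "\<exists>!b. b \<in> tangent_space \<eta> s \<and> \<eta> b b < 1 \<and> boost \<eta> s b s1 = s2"
proof (cases "proj s2 - proj s1 = 0")
  case True
  then have "s1 = s2"
    using future_unit_proj_inj[OF s1 s2] by simp
  then show ?thesis
    using boost_eq_self_iff[OF s1] by (intro ex1I[of _ 0]) (auto simp: tangent_space_def)
next
  case False
  define y where "y = proj s2 - proj s1"
  define n where "n = direction y"
  have n: "\<eta> n s = 0" "\<eta> n n = 1"
    using direction[of y] False by (simp_all add: n_def y_def)
  have s2_proj: "proj s2 = proj s1 + sqrt (\<eta> y y) *\<^sub>R n"
    using direction(3)[of y] False by (simp add: n_def y_def)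
  let ?P = "\<lambda>t. \<bar>t\<bar> < 1 \<and> hyperbolic_rotation t (- \<eta> s s1, \<eta> n s1) = (- \<eta> s s2, \<eta> n s2)"
  have boost_iff: "boost \<eta> s (t *\<^sub>R n) s1 = s2 \<longleftrightarrow> ?P t" if "\<bar>t\<bar> < 1" for t
    using boost_eq_iff[OF n that s2_proj] that by simp
  have "\<exists>!t. ?P t"
    using future_unit_abs_lt[OF s1 n] future_unit_abs_lt[OF s2 n]
      hyperbolic_invariant[OF _ _ n s2_proj] s1 s2
    by (intro hyperbolic_rotation_ex1) (simp_all add: future_unit_def)
  then obtain t where t: "?P t" and t_unique: "\<And>t'. ?P t' \<Longrightarrow> t' = t"
    by blast
  show ?thesis
  proof (rule ex1I[of _ "t *\<^sub>R n"])
    show "t *\<^sub>R n \<in> tangent_space \<eta> s \<and> \<eta> (t *\<^sub>R n) (t *\<^sub>R n) < 1 \<and> boost \<eta> s (t *\<^sub>R n) s1 = s2"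
      using t n boost_iff[of t]
      by (simp add: tangent_space_def abs_square_less_1 power2_eq_square[symmetric])
  next
    fix b assume b: "b \<in> tangent_space \<eta> s \<and> \<eta> b b < 1 \<and> boost \<eta> s b s1 = s2"
    then obtain t' where t': "\<bar>t'\<bar> < 1" "b = t' *\<^sub>R n"
      using boost_eq_imp_parallel[of b s1 s2] False
      by (auto simp: tangent_space_def n_def y_def)
    then have "?P t'"
      using b boost_iff by simp
    then show "b = t *\<^sub>R n"
      using t' t_unique by simp
  qed
qed

lemma link_velocity_eqI:
  assumes "future_unit s1" and "future_unit s2"
    and "\<eta> b s = 0" and "\<eta> b b < 1" and "boost \<eta> s b s1 = s2"
  shows "link_velocity \<eta> s s1 s2 = b"
  unfolding link_velocity_def
  using assms by (intro the1_equality[OF link_velocity_ex1]) (simp_all add: tangent_space_def)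

lemma link_velocity_swap:
  assumes "future_unit s1" and "future_unit s2"
  shows "link_velocity \<eta> s s2 s1 = - link_velocity \<eta> s s1 s2"
proof -
  obtain b where b: "\<eta> b s = 0" "\<eta> b b < 1" "boost \<eta> s b s1 = s2"
    using link_velocity_ex1[OF assms] by (auto simp: tangent_space_def)
  have "boost \<eta> s (- b) s2 = s1"
    using boost_uminus_inverse[OF b(1,2)] b(3) by blast
  then have "link_velocity \<eta> s s2 s1 = - b"
    using b by (intro link_velocity_eqI[OF assms(2,1)]) simp_all
  moreover have "link_velocity \<eta> s s1 s2 = b"
    using b by (intro link_velocity_eqI[OF assms])
  ultimately show ?thesis
    by simp
qed

end

text \<open>Coordinates with respect to the orthonormal basis of \<open>lorentz_form\<close>, the three spatial
  ones collected in a Euclidean space so that Cauchy--Schwarz applies to them.\<close>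

lemma lorentz_form_coordinates:
  fixes \<eta> :: "'v::euclidean_space \<Rightarrow> 'v \<Rightarrow> real"
  assumes "lorentz_form \<eta>"
  obtains \<tau> :: "'v \<Rightarrow> real" and c :: "'v \<Rightarrow> real \<times> real \<times> real"
  where "\<And>u v. \<eta> u v = - \<tau> u * \<tau> v + inner (c u) (c v)"
    and "\<And>u. \<tau> u = 0 \<Longrightarrow> c u = 0 \<Longrightarrow> u = 0"
proof -
  from assms have bil: "bilinear \<eta>" and nondeg: "\<And>u. (\<forall>v. \<eta> u v = 0) \<Longrightarrow> u = 0"
    unfolding lorentz_form_def by auto
  from assms obtain e :: "nat \<Rightarrow> 'v" where span: "span (e ` {..<4}) = UNIV"
    and on: "\<And>i j. i < 4 \<Longrightarrow> j < 4 \<Longrightarrow>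
      \<eta> (e i) (e j) = (if i \<noteq> j then 0 else if i = 0 then -1 else 1)"
    unfolding lorentz_form_def by blast
  have four: "j < 4 \<longleftrightarrow> j = 0 \<or> j = 1 \<or> j = 2 \<or> j = 3" for j :: nat
    by auto
  have vanish: "u = 0" if "\<And>j. j < 4 \<Longrightarrow> \<eta> u (e j) = 0" for u
  proof (rule nondeg, intro allI)
    fix v
    have "linear (\<eta> u)"
      using bil unfolding bilinear_def by simp
    then show "\<eta> u v = 0"
      using linear_eq_0_on_span[of "\<eta> u" "e ` {..<4}" v] span that by auto
  qed
  define \<tau> where "\<tau> u = \<eta> u (e 0)" for u
  define c where "c u = (\<eta> u (e 1), \<eta> u (e 2), \<eta> u (e 3))" for u
  note bil_simps = bilinear_ladd[OF bil] bilinear_lsub[OF bil] bilinear_lmul[OF bil]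
    bilinear_lneg[OF bil] bilinear_radd[OF bil] bilinear_rsub[OF bil] bilinear_rmul[OF bil]
    bilinear_rneg[OF bil]
  have "\<eta> u v = - \<tau> u * \<tau> v + inner (c u) (c v)" for u v
  proof -
    define v' where
      "v' = (- \<eta> v (e 0)) *\<^sub>R e 0 + \<eta> v (e 1) *\<^sub>R e 1 + \<eta> v (e 2) *\<^sub>R e 2 + \<eta> v (e 3) *\<^sub>R e 3"
    have "v - v' = 0"
      by (rule vanish) (auto simp: four v'_def bil_simps on)
    then have "\<eta> u v = \<eta> u v'"
      by simp
    then show ?thesis
      by (simp add: v'_def bil_simps \<tau>_def c_def)
  qed
  moreover have "u = 0" if "\<tau> u = 0" "c u = 0" for u
    using that by (intro vanish) (auto simp: four \<tau>_def c_def zero_prod_def)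
  ultimately show thesis
    by (rule that)
qed

lemma lorentz_observer_of_form:
  fixes \<eta> :: "'v::euclidean_space \<Rightarrow> 'v \<Rightarrow> real"
  assumes L: "lorentz_form \<eta>" and s: "\<eta> s s = -1"
  shows "lorentz_observer \<eta> s"
proof
  show "bilinear \<eta>" and "\<eta> u v = \<eta> v u" for u v
    using L unfolding lorentz_form_def by (elim conjE, simp)+
  show "\<eta> s s = -1"
    by (fact s)
  obtain \<tau> :: "'v \<Rightarrow> real" and c :: "'v \<Rightarrow> real \<times> real \<times> real"
    where eta: "\<And>u v. \<eta> u v = - \<tau> u * \<tau> v + inner (c u) (c v)"
    and nondeg: "\<And>u. \<tau> u = 0 \<Longrightarrow> c u = 0 \<Longrightarrow> u = 0"
    using lorentz_form_coordinates[OF L] by blast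
  fix u assume "\<eta> u s = 0" and "u \<noteq> 0"
  have "(\<tau> s)\<^sup>2 = 1 + inner (c s) (c s)" and "\<tau> u * \<tau> s = inner (c u) (c s)"
    using s \<open>\<eta> u s = 0\<close> unfolding eta by (simp_all add: power2_eq_square)
  moreover have "\<tau> u \<noteq> 0 \<or> c u \<noteq> 0"
    using nondeg \<open>u \<noteq> 0\<close> by blast
  ultimately have "(\<tau> u)\<^sup>2 < inner (c u) (c u)"
    by (rule minkowski_reverse_cauchy_schwarz)
  then show "0 < \<eta> u u"
    unfolding eta by (simp add: power2_eq_square)
qed

lemma hyperboloid_component_unit:
  "S \<in> components (hyperboloid \<eta>) \<Longrightarrow> z \<in> S \<Longrightarrow> \<eta> z z = -1"
  using in_components_subset unfolding hyperboloid_def by blast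

lemma hyperboloid_component_future:
  fixes \<eta> :: "'v::euclidean_space \<Rightarrow> 'v \<Rightarrow> real"
  assumes L: "lorentz_form \<eta>" and S: "S \<in> components (hyperboloid \<eta>)"
    and s: "s \<in> S" and x: "x \<in> S"
  shows "\<eta> x s < 0"
proof (rule ccontr)
  note unit = hyperboloid_component_unit[OF S]
  interpret lorentz_observer \<eta> s
    using lorentz_observer_of_form[OF L unit[OF s]] .
  have nonzero: "\<eta> z s \<noteq> 0" if "z \<in> S" for z
    using spacelike_nonneg[of z] unit[OF that] by auto
  have "linear (\<lambda>z. \<eta> z s)"
    using bilinear unfolding bilinear_def by simp
  then have "continuous_on S (\<lambda>z. \<eta> z s)"
    by (intro linear_continuous_on) (simp add: linear_conv_bounded_linear)
  then have "connected ((\<lambda>z. \<eta> z s) ` S)"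
    using in_components_connected[OF S] by (rule connected_continuous_image)
  moreover assume "\<not> \<eta> x s < 0"
  then have "\<eta> s s \<le> 0" "0 \<le> \<eta> x s"
    using observer_unit by simp_all
  ultimately have "0 \<in> (\<lambda>z. \<eta> z s) ` S"
    using s x unfolding connected_iff_interval by blast
  then show False
    using nonzero by auto
qed

theorem mainTheorem5:
  fixes \<eta> :: "'v::euclidean_space \<Rightarrow> 'v \<Rightarrow> real" and S :: "'v set"
  assumes "lorentz_form \<eta>"
    and "S \<in> components (hyperboloid \<eta>)"
    and "s \<in> S" and "s1 \<in> S" and "s2 \<in> S"
  shows "link_velocity \<eta> s s2 s1 = - link_velocity \<eta> s s1 s2"
proof -
  note unit = hyperboloid_component_unit[OF assms(2)]
  interpret lorentz_observer \<eta> s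
    using lorentz_observer_of_form[OF assms(1) unit[OF assms(3)]] .
  have "future_unit s1" and "future_unit s2"
    using assms hyperboloid_component_future unit unfolding future_unit_def by blast+
  then show ?thesis
    by (rule link_velocity_swap)
qed

end
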